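(* Let $\Gamma$ be a triangulation of a connected closed surface $M$ and let $\tau$ be a $z$-orientation of $\Gamma$. For every vertex of type II, the number of edges of type II directed into this vertex equals the number of edges of type II directed out of it.
   Context: Let $M$ be a connected closed $2$-dimensional surface (not necessarily orientable). A triangulation of $M$ is a $2$-cell embedding of a connected simple finite graph in $M$ such that every face is a triangle; then every edge lies in exactly two distinct faces, and two distinct faces meet in an edge, in a vertex, or not at all. A zigzag in a triangulation $\Gamma$ is a sequence of edges $(e_i)_{i\in\mathbb N}$ such that for every $i$: $e_i$ and $e_{i+1}$ are distinct edges of a common face; the face containing $e_i,e_{i+1}$ is different from the face containing $e_{i+1},e_{i+2}$; and $e_i$, $e_{i+2}$ have no common vertex. Such a sequence is periodic and is regarded as a cyclic sequence $e_1,\dots,e_n$ ($n$ the minimal period); consecutive edges share a vertex, so a zigzag passes through each of its edges in a definite direction (from the vertex shared with the previous edge to the vertex shared with the next). The reversed sequence $Z^{-1}$ of a zigzag $Z$ is again a zigzag and $Z\neq Z^{-1}$. If $\Gamma$ has exactly $k$ zigzags up to reversal, a $z$-orientation of $\Gamma$ is a set $\tau$ of $k$ zigzags containing exactly one of $Z,Z^{-1}$ for every zigzag $Z$. For a $z$-orientation $\tau$, each edge $e$ either occurs twice in one zigzag of $\tau$ and in no other, or occurs once in each of exactly two distinct zigzags of $\tau$ and in no other. The edge $e$ is of type I if these two passages through $e$ are in opposite directions, and of type II if they are in the same direction; edges of type II are regarded as directed edges with this common direction. A vertex is of type I if all edges containing it are of type I, and of type II otherwise. *)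

theory Defs
  imports Main
begin

text \<open>A triangulation of a connected closed surface, given combinatorially by its set of
  faces F (each face a 3-element set of vertices; faces are determined by their vertex sets
  because the graph is simple and two distinct faces meet in an edge, a vertex or not at all).\<close>

definition tri_vertices :: "'a set set \<Rightarrow> 'a set" where
  "tri_vertices F = \<Union>F"

definition tri_edges :: "'a set set \<Rightarrow> 'a set set" where
  "tri_edges F = {e. card e = 2 \<and> (\<exists>f\<in>F. e \<subseteq> f)}"

definition link_verts :: "'a set set \<Rightarrow> 'a \<Rightarrow> 'a set" where
  "link_verts F v = {u. {u, v} \<in> tri_edges F}"

definition link_adj :: "'a set set \<Rightarrow> 'a \<Rightarrow> ('a \<times> 'a) set" where
  "link_adj F v = {(a, b). {v, a, b} \<in> F \<and> a \<noteq> b \<and> a \<noteq> v \<and> b \<noteq> v}"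

definition graph_adj :: "'a set set \<Rightarrow> ('a \<times> 'a) set" where
  "graph_adj F = {(a, b). {a, b} \<in> tri_edges F}"

definition triangulation :: "'a set set \<Rightarrow> bool" where
  "triangulation F \<longleftrightarrow>
     finite F \<and> F \<noteq> {} \<and>
     (\<forall>f\<in>F. card f = 3) \<and>
     (\<forall>e\<in>tri_edges F. card {f\<in>F. e \<subseteq> f} = 2) \<and>
     \<comment> \<open>surface condition: the link of every vertex is a single cycle\<close>
     (\<forall>v\<in>tri_vertices F. \<forall>a\<in>link_verts F v. \<forall>b\<in>link_verts F v.
         (a, b) \<in> (link_adj F v)\<^sup>*) \<and>
     \<comment> \<open>connectedness\<close>
     (\<forall>a\<in>tri_vertices F. \<forall>b\<in>tri_vertices F. (a, b) \<in> (graph_adj F)\<^sup>*)"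

text \<open>Zigzags, represented as (periodic) integer-indexed sequences of edges.\<close>
definition zigzag :: "'a set set \<Rightarrow> (int \<Rightarrow> 'a set) \<Rightarrow> bool" where
  "zigzag F Z \<longleftrightarrow> (\<forall>i.
      Z i \<in> tri_edges F \<and> Z (i + 1) \<in> tri_edges F \<and> Z i \<noteq> Z (i + 1) \<and>
      (\<exists>f\<in>F. Z i \<subseteq> f \<and> Z (i + 1) \<subseteq> f) \<and>
      (\<forall>f\<in>F. \<forall>f'\<in>F. Z i \<union> Z (i + 1) \<subseteq> f \<longrightarrow> Z (i + 1) \<union> Z (i + 2) \<subseteq> f' \<longrightarrow> f \<noteq> f') \<and>
      Z i \<inter> Z (i + 2) = {})"

definition zshift :: "(int \<Rightarrow> 'a set) \<Rightarrow> int \<Rightarrow> (int \<Rightarrow> 'a set)" where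
  "zshift Z k = (\<lambda>i. Z (i + k))"

definition zrev :: "(int \<Rightarrow> 'a set) \<Rightarrow> (int \<Rightarrow> 'a set)" where
  "zrev Z = (\<lambda>i. Z (- i))"

definition z_orientation :: "'a set set \<Rightarrow> (int \<Rightarrow> 'a set) set \<Rightarrow> bool" where
  "z_orientation F T \<longleftrightarrow>
     (\<forall>Z\<in>T. zigzag F Z) \<and>
     (\<forall>Z\<in>T. \<forall>k. zshift Z k \<in> T) \<and>
     (\<forall>Z. zigzag F Z \<longrightarrow> (Z \<in> T \<longleftrightarrow> zrev Z \<notin> T))"

text \<open>Some zigzag of T passes through the edge {u,w} in direction from u to w
  (u shared with the previous edge, w shared with the next edge).\<close>
definition passes :: "(int \<Rightarrow> 'a set) set \<Rightarrow> 'a \<Rightarrow> 'a \<Rightarrow> bool" where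
  "passes T u w \<longleftrightarrow> (\<exists>Z\<in>T. \<exists>i. Z i = {u, w} \<and> u \<in> Z (i - 1) \<and> w \<in> Z (i + 1))"

text \<open>The edge {u,w} is of type II and directed from u to w: all passages through it go
  from u to w.\<close>
definition typeII_dir :: "'a set set \<Rightarrow> (int \<Rightarrow> 'a set) set \<Rightarrow> 'a \<Rightarrow> 'a \<Rightarrow> bool" where
  "typeII_dir F T u w \<longleftrightarrow> {u, w} \<in> tri_edges F \<and> passes T u w \<and> \<not> passes T w u"

definition typeII_edge :: "'a set set \<Rightarrow> (int \<Rightarrow> 'a set) set \<Rightarrow> 'a set \<Rightarrow> bool" where
  "typeII_edge F T e \<longleftrightarrow> (\<exists>u w. e = {u, w} \<and> typeII_dir F T u w)"

definition typeII_vertex :: "'a set set \<Rightarrow> (int \<Rightarrow> 'a set) set \<Rightarrow> 'a \<Rightarrow> bool" where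
  "typeII_vertex F T v \<longleftrightarrow> v \<in> tri_vertices F \<and>
     (\<exists>e\<in>tri_edges F. v \<in> e \<and> typeII_edge F T e)"

end

theory Submission
  imports Defs
begin

text \<open>Fix a vertex v. Every corner {a, v, b} of a face lies on exactly one zigzag of the
  z-orientation, up to shift: a zigzag is determined by two consecutive edges, and the
  orientation contains exactly one of Z and its reversal. So the orientation picks one of the
  two turns a \<rightarrow> v \<rightarrow> b and b \<rightarrow> v \<rightarrow> a. Drawing these turns as arcs on the link of v gives a
  digraph in which every vertex a has total degree 2, because the edge {a, v} lies in exactly two
  faces. The edge {a, v} is of type II directed into v iff both arcs at a leave a, and directed
  out of v iff both arcs enter a. Out-degrees and in-degrees have the same sum, so these two
  kinds of vertices are equally numerous.\<close>

section \<open>Double counting in digraphs of total degree two\<close>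

lemma sum_card_Image_eq_card:
  assumes "finite V" and "D \<subseteq> V \<times> V"
  shows "(\<Sum>a\<in>V. card (D `` {a})) = card D"
proof -
  have "D = (SIGMA a:V. D `` {a})" using assms(2) by blast
  moreover have "finite (D `` {a})" for a
    by (rule finite_subset[OF _ assms(1)]) (use assms(2) in blast)
  ultimately show ?thesis using assms(1) by (metis card_SigmaI)
qed

lemma card_converse: "card (D\<inverse>) = card D"
proof -
  have "D\<inverse> = prod.swap ` D" by force
  thus ?thesis by (simp add: card_image)
qed

lemma card_outdeg2_eq_card_indeg2:
  fixes D :: "('b \<times> 'b) set"
  assumes "finite V" and "D \<subseteq> V \<times> V"
    and deg: "\<And>a. a \<in> V \<Longrightarrow> card (D `` {a}) + card (D\<inverse> `` {a}) = 2"
  shows "card {a\<in>V. card (D `` {a}) = 2} = card {a\<in>V. card (D\<inverse> `` {a}) = 2}"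
proof -
  let ?out = "\<lambda>a. card (D `` {a})" and ?in = "\<lambda>a. card (D\<inverse> `` {a})"
  have "D\<inverse> \<subseteq> V \<times> V" using assms(2) by blast
  hence "sum ?out V = sum ?in V"
    using sum_card_Image_eq_card[OF assms(1,2)] sum_card_Image_eq_card[OF assms(1)] card_converse
    by metis
  hence "0 = (\<Sum>a\<in>V. int (?out a) - int (?in a))"
    by (simp add: sum_subtractf flip: of_nat_sum)
  also have "\<dots> = (\<Sum>a\<in>V. 2 * of_bool (?out a = 2) - 2 * of_bool (?in a = 2))"
  proof (rule sum.cong[OF refl])
    fix a assume "a \<in> V"
    with deg show "int (?out a) - int (?in a) = 2 * of_bool (?out a = 2) - 2 * of_bool (?in a = 2)"
      by fastforce
  qed
  also have "\<dots> = 2 * int (card {a\<in>V. ?out a = 2}) - 2 * int (card {a\<in>V. ?in a = 2})"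
    using assms(1) by (simp add: sum_subtractf sum.inter_filter Int_def flip: sum_distrib_left)
  finally show ?thesis by simp
qed

section \<open>Faces, edges and zigzags\<close>

lemma card_tri_edge: "e \<in> tri_edges F \<Longrightarrow> card e = 2"
  by (simp add: tri_edges_def)

lemma tri_edgeI: "card e = 2 \<Longrightarrow> f \<in> F \<Longrightarrow> e \<subseteq> f \<Longrightarrow> e \<in> tri_edges F"
  by (auto simp: tri_edges_def)

lemma tri_edge_containing:
  assumes "e \<in> tri_edges F" and "v \<in> e"
  obtains b where "e = {v, b}" and "b \<noteq> v"
proof -
  obtain x y where "e = {x, y}" "x \<noteq> y"
    using assms(1) by (auto simp: tri_edges_def card_2_iff)
  thus thesis using that assms(2) by (auto simp: doubleton_eq_iff)
qed

lemma card_union_distinct_doubletons: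
  assumes "card p = 2" and "card q = 2" and "p \<noteq> q"
  shows "card (p \<union> q) \<ge> 3"
proof -
  have fin: "finite p" "finite q" using assms by (auto intro: card_ge_0_finite)
  have "\<not> q \<subseteq> p"
  proof
    assume "q \<subseteq> p"
    hence "q = p" using card_seteq[OF fin(1)] assms by simp
    thus False using assms(3) by simp
  qed
  then obtain x where x: "x \<in> q" "x \<notin> p" by blast
  have "card (insert x p) \<le> card (p \<union> q)" using x fin by (intro card_mono) auto
  moreover have "card (insert x p) = 3" using assms(1) x fin by simp
  ultimately show ?thesis by simp
qed

lemma z_orientation_zigzag: "z_orientation F T \<Longrightarrow> Z \<in> T \<Longrightarrow> zigzag F Z"
  by (simp add: z_orientation_def)

lemma z_orientation_zshift_zrev_notin:
  assumes "z_orientation F T" and "Z \<in> T"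
  shows "zshift (zrev Z) m \<notin> T"
proof
  assume "zshift (zrev Z) m \<in> T"
  hence "zshift (zshift (zrev Z) m) (- m) \<in> T" using assms(1) unfolding z_orientation_def by blast
  moreover have "zshift (zshift (zrev Z) m) (- m) = zrev Z" by (simp add: zshift_def)
  ultimately have "zrev Z \<in> T" by simp
  moreover have "zigzag F Z" using assms by (rule z_orientation_zigzag)
  ultimately show False using assms unfolding z_orientation_def by blast
qed

definition turns_at :: "(int \<Rightarrow> 'a set) set \<Rightarrow> 'a \<Rightarrow> ('a \<times> 'a) set" where
  "turns_at T v = {(a, b). \<exists>Z\<in>T. \<exists>i. Z i = {a, v} \<and> Z (i + 1) = {v, b}}"

lemma turns_atI: "Z \<in> T \<Longrightarrow> Z i = {a, v} \<Longrightarrow> Z (i + 1) = {v, b} \<Longrightarrow> (a, b) \<in> turns_at T v"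
  unfolding turns_at_def by (intro CollectI case_prodI bexI[of _ Z] exI[of _ i] conjI)

lemma passesI: "Z \<in> T \<Longrightarrow> Z i = {u, w} \<Longrightarrow> u \<in> Z (i - 1) \<Longrightarrow> w \<in> Z (i + 1) \<Longrightarrow> passes T u w"
  unfolding passes_def by (intro bexI[of _ Z] exI[of _ i] conjI)

lemma turns_atE:
  assumes "(a, b) \<in> turns_at T v"
  obtains Z i where "Z \<in> T" "Z i = {a, v}" "Z (i + 1) = {v, b}"
  using assms by (auto simp: turns_at_def)

lemma link_adj_sym: "(a, b) \<in> link_adj F v \<Longrightarrow> (b, a) \<in> link_adj F v"
  by (auto simp: link_adj_def insert_commute)

lemma link_adj_subset: "link_adj F v \<subseteq> link_verts F v \<times> link_verts F v"
proof (rule subrelI)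
  fix a b assume "(a, b) \<in> link_adj F v"
  hence "{v, a, b} \<in> F" "a \<noteq> v" "b \<noteq> v" by (auto simp: link_adj_def)
  hence "{a, v} \<in> tri_edges F" "{b, v} \<in> tri_edges F" by (auto intro: tri_edgeI)
  thus "(a, b) \<in> link_verts F v \<times> link_verts F v" by (simp add: link_verts_def)
qed

locale closed_pseudosurface =
  fixes F :: "'a set set"
  assumes finite_faces: "finite F"
    and card_face: "f \<in> F \<Longrightarrow> card f = 3"
    and card_faces_containing_edge: "e \<in> tri_edges F \<Longrightarrow> card {f\<in>F. e \<subseteq> f} = 2"
begin

lemma finite_face: "f \<in> F \<Longrightarrow> finite f"
  using card_face by (intro card_ge_0_finite) simp

lemma edges_union_eq_face:
  assumes "p \<in> tri_edges F" "q \<in> tri_edges F" "p \<noteq> q" "f \<in> F" "p \<union> q \<subseteq> f"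
  shows "p \<union> q = f"
  using card_seteq[OF finite_face[OF assms(4)] assms(5)] card_face[OF assms(4)]
    card_union_distinct_doubletons[OF card_tri_edge[OF assms(1)] card_tri_edge[OF assms(2)] assms(3)]
  by simp

lemma other_face_exists:
  assumes "e \<in> tri_edges F" "f \<in> F" "e \<subseteq> f"
  obtains g where "g \<in> F" "e \<subseteq> g" "g \<noteq> f"
proof -
  have "f \<in> {g\<in>F. e \<subseteq> g}" using assms(2,3) by simp
  hence "card ({g\<in>F. e \<subseteq> g} - {f}) = 1"
    using card_faces_containing_edge[OF assms(1)] by (simp only: card_Diff_singleton)
  then obtain g where "{g\<in>F. e \<subseteq> g} - {f} = {g}" by (rule card_1_singletonE)
  hence "g \<in> F" "e \<subseteq> g" "g \<noteq> f" by auto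
  thus thesis by (rule that)
qed

lemma other_face_unique:
  assumes "e \<in> tri_edges F" and "f \<in> F" "e \<subseteq> f"
    and "g \<in> F" "e \<subseteq> g" "g \<noteq> f" and "g' \<in> F" "e \<subseteq> g'" "g' \<noteq> f"
  shows "g = g'"
proof (rule ccontr)
  assume "g \<noteq> g'"
  hence "card {f, g, g'} = 3" using assms(6,9) by simp
  moreover have "{f, g, g'} \<subseteq> {h\<in>F. e \<subseteq> h}" using assms by blast
  ultimately have "3 \<le> card {h\<in>F. e \<subseteq> h}"
    using card_mono[of "{h\<in>F. e \<subseteq> h}" "{f, g, g'}"] finite_faces by simp
  thus False using card_faces_containing_edge[OF assms(1)] by simp
qed

definition face_pair :: "'a set \<Rightarrow> 'a set \<Rightarrow> bool" where
  "face_pair p q \<longleftrightarrow> p \<in> tri_edges F \<and> q \<in> tri_edges F \<and> p \<noteq> q \<and> p \<union> q \<in> F"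

definition zz_triple :: "'a set \<Rightarrow> 'a set \<Rightarrow> 'a set \<Rightarrow> bool" where
  "zz_triple p q r \<longleftrightarrow> face_pair p q \<and> face_pair q r \<and> p \<union> q \<noteq> q \<union> r \<and> p \<inter> r = {}"

lemma face_pair_iff_common_face:
  "face_pair p q \<longleftrightarrow> p \<in> tri_edges F \<and> q \<in> tri_edges F \<and> p \<noteq> q \<and> (\<exists>f\<in>F. p \<subseteq> f \<and> q \<subseteq> f)"
proof
  assume "face_pair p q"
  thus "p \<in> tri_edges F \<and> q \<in> tri_edges F \<and> p \<noteq> q \<and> (\<exists>f\<in>F. p \<subseteq> f \<and> q \<subseteq> f)"
    unfolding face_pair_def by blast
next
  assume "p \<in> tri_edges F \<and> q \<in> tri_edges F \<and> p \<noteq> q \<and> (\<exists>f\<in>F. p \<subseteq> f \<and> q \<subseteq> f)"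
  then obtain f where "p \<in> tri_edges F" "q \<in> tri_edges F" "p \<noteq> q" "f \<in> F" "p \<union> q \<subseteq> f" by auto
  thus "face_pair p q" unfolding face_pair_def using edges_union_eq_face by simp
qed

lemma face_pair_sym: "face_pair p q \<longleftrightarrow> face_pair q p"
  unfolding face_pair_def by (metis Un_commute)

lemma card_face_pair_inter:
  assumes "face_pair p q"
  shows "card (p \<inter> q) = 1"
proof -
  have "card p = 2" "card q = 2" "card (p \<union> q) = 3"
    using assms card_tri_edge card_face by (auto simp: face_pair_def)
  moreover from this have "finite p" "finite q" by (auto intro: card_ge_0_finite)
  ultimately show ?thesis using card_Un_Int[of p q] by simp
qed

lemma zz_triple_sym: "zz_triple p q r \<longleftrightarrow> zz_triple r q p"
  unfolding zz_triple_def using face_pair_sym by (metis Un_commute Int_commute)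

lemma zz_triple_exists:
  assumes "face_pair p q"
  obtains r where "zz_triple p q r"
proof -
  have p: "p \<in> tri_edges F" and q: "q \<in> tri_edges F" and pq: "p \<union> q \<in> F"
    using assms by (auto simp: face_pair_def)
  obtain c where c: "p \<inter> q = {c}" using card_face_pair_inter[OF assms] card_1_singletonE by blast
  obtain x where x: "p = {c, x}" "x \<noteq> c" using tri_edge_containing[OF p] c by blast
  obtain y where y: "q = {c, y}" "y \<noteq> c" using tri_edge_containing[OF q] c by blast
  have "x \<noteq> y" using c x y by auto
  obtain g where g: "g \<in> F" "q \<subseteq> g" "g \<noteq> p \<union> q" using other_face_exists[OF q pq] by blast
  have "card (g - q) = 1"
    using card_Diff_subset[OF _ g(2)] card_face[OF g(1)] card_tri_edge[OF q] y(1) by simp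
  then obtain z where "g - q = {z}" by (rule card_1_singletonE)
  hence z: "g = {c, y, z}" "z \<noteq> c" "z \<noteq> y" using g(2) y(1) by auto
  have "z \<noteq> x"
  proof
    assume "z = x"
    hence "g = p \<union> q" unfolding z(1) x(1) y(1) by auto
    thus False using g(3) by simp
  qed
  have "{y, z} \<subseteq> g" unfolding z(1) by auto
  hence r: "{y, z} \<in> tri_edges F" using g(1) z(3) by (auto simp: tri_edges_def)
  have qr: "q \<union> {y, z} = g" unfolding z(1) y(1) by auto
  have "q \<noteq> {y, z}" unfolding y(1) using y(2) z(2) by (auto simp: doubleton_eq_iff)
  hence "face_pair q {y, z}" using q r qr g(1) by (simp add: face_pair_def)
  moreover have "p \<union> q \<noteq> q \<union> {y, z}" using qr g(3) by simp
  moreover have "p \<inter> {y, z} = {}"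
    unfolding x(1) using y(2) z(2) \<open>x \<noteq> y\<close> \<open>z \<noteq> x\<close> by auto
  ultimately have "zz_triple p q {y, z}" using assms by (simp add: zz_triple_def)
  thus thesis by (rule that)
qed

lemma zz_triple_unique:
  assumes "zz_triple p q r" and "zz_triple p q r'"
  shows "r = r'"
proof -
  have faces: "q \<union> r \<in> F" "q \<union> r' \<in> F" "p \<union> q \<in> F" and q: "q \<in> tri_edges F"
    and ne: "q \<union> r \<noteq> p \<union> q" "q \<union> r' \<noteq> p \<union> q"
    and r: "r \<in> tri_edges F" "r' \<in> tri_edges F" and disj: "p \<inter> r = {}" "p \<inter> r' = {}"
    using assms by (auto simp: zz_triple_def face_pair_def)
  have g: "q \<union> r' = q \<union> r"
    using other_face_unique[OF q faces(3) _ faces(1) _ ne(1) faces(2) _ ne(2)] by blast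
  obtain c where c: "p \<inter> q = {c}"
    using assms card_face_pair_inter card_1_singletonE by (metis zz_triple_def)
  define s where "s = (q \<union> r) - {c}"
  have "c \<in> q \<union> r" using c by blast
  hence "finite s" "card s = 2"
    using card_face[OF faces(1)] finite_face[OF faces(1)] by (simp_all add: s_def)
  moreover have "r \<subseteq> s" "r' \<subseteq> s" using c disj g unfolding s_def by blast+
  ultimately show ?thesis using card_seteq[of s r] card_seteq[of s r'] card_tri_edge[OF r(1)]
      card_tri_edge[OF r(2)] by simp
qed

lemma zigzag_iff_triples: "zigzag F Z \<longleftrightarrow> (\<forall>i. zz_triple (Z i) (Z (i + 1)) (Z (i + 2)))"
proof
  assume Z: "zigzag F Z"
  note step = Z[unfolded zigzag_def, rule_format]
  have pair: "face_pair (Z j) (Z (j + 1))" for j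
    unfolding face_pair_iff_common_face using step[of j] by blast
  show "\<forall>i. zz_triple (Z i) (Z (i + 1)) (Z (i + 2))"
  proof
    fix i
    have "face_pair (Z (i + 1)) (Z (i + 2))" using pair[of "i + 1"] by (simp add: add.assoc)
    moreover have "Z i \<union> Z (i + 1) \<noteq> Z (i + 1) \<union> Z (i + 2)"
      using step[of i] pair[of i] \<open>face_pair (Z (i + 1)) (Z (i + 2))\<close> by (auto simp: face_pair_def)
    ultimately show "zz_triple (Z i) (Z (i + 1)) (Z (i + 2))"
      using pair[of i] step[of i] by (simp add: zz_triple_def)
  qed
next
  assume triples: "\<forall>i. zz_triple (Z i) (Z (i + 1)) (Z (i + 2))"
  show "zigzag F Z"
    unfolding zigzag_def
  proof
    fix i
    have pq: "face_pair (Z i) (Z (i + 1))" and qr: "face_pair (Z (i + 1)) (Z (i + 2))"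
      and "Z i \<union> Z (i + 1) \<noteq> Z (i + 1) \<union> Z (i + 2)" and "Z i \<inter> Z (i + 2) = {}"
      using triples by (auto simp: zz_triple_def)
    moreover have "f = Z i \<union> Z (i + 1)" if "f \<in> F" "Z i \<union> Z (i + 1) \<subseteq> f" for f
      using edges_union_eq_face pq that by (simp add: face_pair_def)
    moreover have "f = Z (i + 1) \<union> Z (i + 2)" if "f \<in> F" "Z (i + 1) \<union> Z (i + 2) \<subseteq> f" for f
      using edges_union_eq_face qr that by (simp add: face_pair_def)
    ultimately show "Z i \<in> tri_edges F \<and> Z (i + 1) \<in> tri_edges F \<and> Z i \<noteq> Z (i + 1) \<and>
      (\<exists>f\<in>F. Z i \<subseteq> f \<and> Z (i + 1) \<subseteq> f) \<and>
      (\<forall>f\<in>F. \<forall>f'\<in>F. Z i \<union> Z (i + 1) \<subseteq> f \<longrightarrow> Z (i + 1) \<union> Z (i + 2) \<subseteq> f' \<longrightarrow> f \<noteq> f') \<and>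
      Z i \<inter> Z (i + 2) = {}"
      by (metis face_pair_iff_common_face)
  qed
qed

lemma zigzag_zz_triple: "zigzag F Z \<Longrightarrow> zz_triple (Z i) (Z (i + 1)) (Z (i + 2))"
  by (simp add: zigzag_iff_triples)

lemma zigzag_face_pair: "zigzag F Z \<Longrightarrow> face_pair (Z i) (Z (i + 1))"
  using zigzag_zz_triple by (simp add: zz_triple_def)

definition zz_step :: "'a set \<times> 'a set \<Rightarrow> 'a set \<times> 'a set" where
  "zz_step s = (snd s, THE r. zz_triple (fst s) (snd s) r)"

lemma zz_triple_zz_step:
  assumes "face_pair (fst s) (snd s)"
  shows "zz_triple (fst s) (snd s) (snd (zz_step s))"
proof -
  obtain r where r: "zz_triple (fst s) (snd s) r" using zz_triple_exists[OF assms] .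
  hence "(THE r. zz_triple (fst s) (snd s) r) = r" by (rule the_equality[OF _ zz_triple_unique[OF _ r]])
  thus ?thesis using r by (simp add: zz_step_def)
qed

lemma zz_ray:
  assumes "face_pair p q"
  shows "\<exists>f. f 0 = p \<and> f 1 = q \<and> (\<forall>n. zz_triple (f n) (f (Suc n)) (f (Suc (Suc n))))"
proof -
  define s where "s n = (zz_step ^^ n) (p, q)" for n
  have s_Suc: "s (Suc n) = zz_step (s n)" for n by (simp add: s_def)
  have pair: "face_pair (fst (s n)) (snd (s n))" for n
  proof (induction n)
    case 0
    show ?case using assms by (simp add: s_def)
  next
    case (Suc n)
    have "face_pair (snd (s n)) (snd (s (Suc n)))"
      using zz_triple_zz_step[OF Suc.IH] by (simp add: s_Suc zz_triple_def)
    moreover have "fst (s (Suc n)) = snd (s n)" by (simp add: s_Suc zz_step_def)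
    ultimately show ?case by simp
  qed
  define f where "f n = fst (s n)" for n
  have f_Suc: "f (Suc n) = snd (s n)" for n by (simp add: f_def s_Suc zz_step_def)
  have "f 0 = p" "f 1 = q" using f_Suc[of 0] by (simp_all add: f_def s_def)
  moreover have "zz_triple (f n) (f (Suc n)) (f (Suc (Suc n)))" for n
    using zz_triple_zz_step[OF pair[of n]] unfolding f_Suc by (simp add: f_def s_Suc)
  ultimately show ?thesis by blast
qed

text \<open>Every pair of distinct edges of a face starts a zigzag: glue the forward ray from
  \<open>(p, q)\<close> with the forward ray from \<open>(q, p)\<close>, read backwards.\<close>
lemma zigzag_through:
  assumes "face_pair p q"
  shows "\<exists>Z. zigzag F Z \<and> Z 0 = p \<and> Z 1 = q"
proof -
  obtain f where f: "f 0 = p" "f 1 = q" "\<And>n. zz_triple (f n) (f (Suc n)) (f (Suc (Suc n)))"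
    using zz_ray[OF assms] by blast
  obtain g where g: "g 0 = q" "g 1 = p" "\<And>n. zz_triple (g n) (g (Suc n)) (g (Suc (Suc n)))"
    using zz_ray assms face_pair_sym by blast
  define Z where "Z i = (if 0 \<le> i then f (nat i) else g (nat (1 - i)))" for i
  have Zf: "Z i = f (nat i)" if "0 \<le> i" for i using that by (simp add: Z_def)
  have Zg: "Z i = g (nat (1 - i))" if i: "i \<le> 1" for i
  proof -
    consider "i < 0" | "i = 0" | "i = 1" using i by linarith
    thus ?thesis using f(1,2) g(1,2) by cases (simp_all add: Z_def)
  qed
  have "zz_triple (Z i) (Z (i + 1)) (Z (i + 2))" for i
  proof (cases "0 \<le> i")
    case True
    hence "nat (i + 1) = Suc (nat i)" "nat (i + 2) = Suc (Suc (nat i))" by simp_all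
    thus ?thesis using f(3)[of "nat i"] Zf True by simp
  next
    case False
    define n where "n = nat (- 1 - i)"
    have "nat (1 - i) = Suc (Suc n)" "nat (1 - (i + 1)) = Suc n" "nat (1 - (i + 2)) = n"
      using False by (simp_all add: n_def)
    hence "Z i = g (Suc (Suc n))" "Z (i + 1) = g (Suc n)" "Z (i + 2) = g n"
      using Zg[of i] Zg[of "i + 1"] Zg[of "i + 2"] False by simp_all
    thus ?thesis using g(3)[of n] zz_triple_sym by simp
  qed
  hence "zigzag F Z" by (simp add: zigzag_iff_triples)
  thus ?thesis using Zf[of 0] Zf[of 1] f by auto
qed

lemma zigzag_zshift:
  assumes "zigzag F Z"
  shows "zigzag F (zshift Z k)"
  unfolding zigzag_iff_triples zshift_def
proof
  fix i
  show "zz_triple (Z (i + k)) (Z (i + 1 + k)) (Z (i + 2 + k))"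
    using zigzag_zz_triple[OF assms, of "i + k"] by (simp add: ac_simps)
qed

lemma zigzag_zrev:
  assumes "zigzag F Z"
  shows "zigzag F (zrev Z)"
  unfolding zigzag_iff_triples zrev_def
proof
  fix i
  have "zz_triple (Z (- i - 2)) (Z (- i - 2 + 1)) (Z (- i - 2 + 2))"
    using zigzag_zz_triple[OF assms] .
  thus "zz_triple (Z (- i)) (Z (- (i + 1))) (Z (- (i + 2)))"
    using zz_triple_sym by (simp add: algebra_simps)
qed

lemma zigzag_eqI:
  assumes Z: "zigzag F Z" and W: "zigzag F W" and "Z k = W k" "Z (k + 1) = W (k + 1)"
  shows "Z = W"
proof
  fix i
  have "Z i = W i \<and> Z (i + 1) = W (i + 1)"
  proof (induction i rule: int_induct[where k = k])
    case base
    show ?case using assms(3,4) by simp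
  next
    case (step1 i)
    hence "Z (i + 2) = W (i + 2)"
      using zz_triple_unique zigzag_zz_triple[OF Z, of i] zigzag_zz_triple[OF W, of i] by simp
    thus ?case using step1 by (simp add: add.assoc)
  next
    case (step2 i)
    have idx: "i - 1 + 1 = i" "i - 1 + 2 = i + 1" by simp_all
    have "zz_triple (Z (i + 1)) (Z i) (Z (i - 1))" "zz_triple (W (i + 1)) (W i) (W (i - 1))"
      using zigzag_zz_triple[OF Z, of "i - 1"] zigzag_zz_triple[OF W, of "i - 1"]
      unfolding idx zz_triple_sym[of _ _ "_ (i + 1)"] by simp_all
    hence "Z (i - 1) = W (i - 1)" using step2 zz_triple_unique by simp
    thus ?case using step2 by simp
  qed
  thus "Z i = W i" ..
qed

lemma zigzag_passage:
  assumes "zigzag F Z" and "Z i = {x, y}"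
  shows "y \<in> Z (i + 1) \<longleftrightarrow> x \<in> Z (i - 1)"
proof -
  have "card (Z (i - 1) \<inter> Z i) = 1" "card (Z i \<inter> Z (i + 1)) = 1"
    using card_face_pair_inter[OF zigzag_face_pair[OF assms(1), of "i - 1"]]
      card_face_pair_inter[OF zigzag_face_pair[OF assms(1), of i]] by simp_all
  hence "Z (i - 1) \<inter> {x, y} \<noteq> {}" "{x, y} \<inter> Z (i + 1) \<noteq> {}"
    unfolding assms(2) by force+
  moreover have "Z (i - 1) \<inter> Z (i + 1) = {}"
    using zigzag_zz_triple[OF assms(1), of "i - 1"] by (simp add: zz_triple_def add.commute)
  ultimately show ?thesis by auto
qed

section \<open>Turns of the zigzags at a vertex\<close>

lemma turns_at_subset_link_adj:
  assumes "z_orientation F T"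
  shows "turns_at T v \<subseteq> link_adj F v"
proof (rule subrelI)
  fix a b assume "(a, b) \<in> turns_at T v"
  then obtain Z i where "Z \<in> T" "Z i = {a, v}" "Z (i + 1) = {v, b}" by (rule turns_atE)
  hence fp: "face_pair {a, v} {v, b}"
    using zigzag_face_pair[OF z_orientation_zigzag[OF assms]] by metis
  hence "card {a, v} = 2" "card {v, b} = 2" using card_tri_edge by (auto simp: face_pair_def)
  hence "a \<noteq> v" "b \<noteq> v" by auto
  moreover have "a \<noteq> b" "{a, v} \<union> {v, b} \<in> F" using fp by (auto simp: face_pair_def)
  moreover have "{a, v} \<union> {v, b} = {v, a, b}" by auto
  ultimately show "(a, b) \<in> link_adj F v" by (simp add: link_adj_def)
qed

lemma turns_at_total:
  assumes T: "z_orientation F T" and ab: "(a, b) \<in> link_adj F v"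
  shows "(a, b) \<in> turns_at T v \<or> (b, a) \<in> turns_at T v"
proof -
  have f: "{v, a, b} \<in> F" "a \<noteq> b" "a \<noteq> v" "b \<noteq> v" using ab by (simp_all add: link_adj_def)
  have "{a, v} \<in> tri_edges F" "{v, b} \<in> tri_edges F" using f by (auto intro: tri_edgeI)
  moreover have "{a, v} \<union> {v, b} = {v, a, b}" "{a, v} \<noteq> {v, b}" using f by (auto simp: doubleton_eq_iff)
  ultimately have "face_pair {a, v} {v, b}" using f(1) by (simp add: face_pair_def)
  then obtain Z where Z: "zigzag F Z" "Z 0 = {a, v}" "Z 1 = {v, b}"
    using zigzag_through by blast
  show ?thesis
  proof (cases "Z \<in> T")
    case True
    thus ?thesis using turns_atI[of Z T 0] Z by simp
  next
    case False
    hence "zrev Z \<in> T" using T Z(1) by (auto simp: z_orientation_def)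
    moreover have "zrev Z (- 1) = {b, v}" "zrev Z (- 1 + 1) = {v, a}"
      using Z by (auto simp: zrev_def)
    ultimately show ?thesis using turns_atI[of "zrev Z" T "- 1" b v a] by simp
  qed
qed

text \<open>Opposite turns would make a shifted reversal of one zigzag of T agree with another one
  on two consecutive edges, hence coincide with it.\<close>
lemma turns_at_asym:
  assumes T: "z_orientation F T" and "(a, b) \<in> turns_at T v"
  shows "(b, a) \<notin> turns_at T v"
proof
  assume "(b, a) \<in> turns_at T v"
  with assms(2) obtain Z Z' i j where Z: "Z \<in> T" "Z i = {a, v}" "Z (i + 1) = {v, b}"
    and Z': "Z' \<in> T" "Z' j = {b, v}" "Z' (j + 1) = {v, a}"
    by (meson turns_atE)
  define W where "W = zshift (zrev Z') (- i - j - 1)"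
  have "W i = Z' (j + 1)" "W (i + 1) = Z' j"
    by (simp_all add: W_def zshift_def zrev_def add.commute)
  hence "W i = Z i" "W (i + 1) = Z (i + 1)" using Z Z' by (simp_all add: insert_commute)
  moreover have "zigzag F W"
    unfolding W_def using zigzag_zshift zigzag_zrev z_orientation_zigzag[OF T Z'(1)] by blast
  ultimately have "W = Z" using zigzag_eqI z_orientation_zigzag[OF T Z(1)] by blast
  hence "W \<in> T" using Z(1) by simp
  thus False using z_orientation_zshift_zrev_notin[OF T Z'(1)] unfolding W_def by blast
qed

lemma passes_iff_turns_at:
  assumes T: "z_orientation F T"
  shows "passes T u v \<longleftrightarrow> (\<exists>b. (u, b) \<in> turns_at T v)"
proof
  assume "passes T u v"
  then obtain Z i where Z: "Z \<in> T" "Z i = {u, v}" "v \<in> Z (i + 1)" by (auto simp: passes_def)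
  have "Z (i + 1) \<in> tri_edges F"
    using zigzag_face_pair[OF z_orientation_zigzag[OF T Z(1)]] by (simp add: face_pair_def)
  then obtain b where "Z (i + 1) = {v, b}" using Z(3) by (rule tri_edge_containing)
  thus "\<exists>b. (u, b) \<in> turns_at T v" using turns_atI[OF Z(1,2)] by auto
next
  assume "\<exists>b. (u, b) \<in> turns_at T v"
  then obtain b Z i where Z: "Z \<in> T" "Z i = {u, v}" "Z (i + 1) = {v, b}"
    by (meson turns_atE)
  hence "u \<in> Z (i - 1)" using zigzag_passage[OF z_orientation_zigzag[OF T Z(1)] Z(2)] by simp
  thus "passes T u v" using passesI[OF Z(1,2)] Z(3) by simp
qed

lemma passes_from_iff_turns_at:
  assumes T: "z_orientation F T"
  shows "passes T v u \<longleftrightarrow> (\<exists>b. (b, u) \<in> turns_at T v)"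
proof
  assume "passes T v u"
  then obtain Z i where Z: "Z \<in> T" "Z i = {v, u}" "v \<in> Z (i - 1)" by (auto simp: passes_def)
  have "Z (i - 1) \<in> tri_edges F"
    using zigzag_face_pair[OF z_orientation_zigzag[OF T Z(1)], of "i - 1"] by (simp add: face_pair_def)
  then obtain b where "Z (i - 1) = {v, b}" using Z(3) by (rule tri_edge_containing)
  hence "Z (i - 1) = {b, v}" "Z (i - 1 + 1) = {v, u}" using Z(2) by (simp_all add: insert_commute)
  thus "\<exists>b. (b, u) \<in> turns_at T v" using turns_atI[OF Z(1), of "i - 1" b v u] by auto
next
  assume "\<exists>b. (b, u) \<in> turns_at T v"
  then obtain b Z j where Z: "Z \<in> T" "Z j = {b, v}" "Z (j + 1) = {v, u}"
    by (meson turns_atE)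
  hence "u \<in> Z (j + 1 + 1)"
    using zigzag_passage[OF z_orientation_zigzag[OF T Z(1)] Z(3)] by simp
  thus "passes T v u" using passesI[OF Z(1,3)] Z(2) by simp
qed

lemma finite_link_verts: "finite (link_verts F v)"
proof (rule finite_subset)
  show "link_verts F v \<subseteq> \<Union>F" by (auto simp: link_verts_def tri_edges_def)
  show "finite (\<Union>F)" using finite_faces finite_face by blast
qed

lemma card_link_adj_Image:
  assumes "u \<in> link_verts F v"
  shows "card (link_adj F v `` {u}) = 2"
proof -
  have e: "{u, v} \<in> tri_edges F" using assms by (simp add: link_verts_def)
  hence "u \<noteq> v" by (auto simp: tri_edges_def)
  have "inj_on (\<lambda>b. {v, u, b}) (link_adj F v `` {u})"
    by (rule inj_onI) (auto simp: link_adj_def insert_eq_iff doubleton_eq_iff)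
  moreover have "(\<lambda>b. {v, u, b}) ` (link_adj F v `` {u}) = {f\<in>F. {u, v} \<subseteq> f}"
  proof
    show "(\<lambda>b. {v, u, b}) ` (link_adj F v `` {u}) \<subseteq> {f\<in>F. {u, v} \<subseteq> f}"
      by (auto simp: link_adj_def)
  next
    show "{f\<in>F. {u, v} \<subseteq> f} \<subseteq> (\<lambda>b. {v, u, b}) ` (link_adj F v `` {u})"
    proof
      fix f assume f: "f \<in> {f\<in>F. {u, v} \<subseteq> f}"
      hence "card (f - {u, v}) = 1"
        using card_face finite_face \<open>u \<noteq> v\<close> by (simp add: card_Diff_subset)
      then obtain b where "f - {u, v} = {b}" by (rule card_1_singletonE)
      hence "f = {v, u, b}" "b \<noteq> u" "b \<noteq> v" using f by auto
      thus "f \<in> (\<lambda>b. {v, u, b}) ` (link_adj F v `` {u})"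
        using f \<open>u \<noteq> v\<close> by (auto simp: link_adj_def)
    qed
  qed
  ultimately have "card (link_adj F v `` {u}) = card {f\<in>F. {u, v} \<subseteq> f}"
    by (metis card_image)
  thus ?thesis using card_faces_containing_edge[OF e] by simp
qed

lemma card_turns_at_Image:
  assumes T: "z_orientation F T" and u: "u \<in> link_verts F v"
  shows "card (turns_at T v `` {u}) + card ((turns_at T v)\<inverse> `` {u}) = 2"
proof -
  let ?D = "turns_at T v"
  have D: "?D \<subseteq> link_adj F v" by (rule turns_at_subset_link_adj[OF T])
  have "(u, b) \<in> ?D \<or> (b, u) \<in> ?D \<longleftrightarrow> (u, b) \<in> link_adj F v" for b
    using D turns_at_total[OF T, of u b] link_adj_sym[of b u] by blast
  hence union: "?D `` {u} \<union> ?D\<inverse> `` {u} = link_adj F v `` {u}" by auto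
  have "(b, u) \<notin> ?D" if "(u, b) \<in> ?D" for b
    using turns_at_asym[OF T that] .
  hence disjoint: "?D `` {u} \<inter> ?D\<inverse> `` {u} = {}" by auto
  have "link_adj F v `` {u} \<subseteq> link_verts F v" using link_adj_subset[of F v] by blast
  hence "finite (link_adj F v `` {u})" using finite_link_verts by (rule finite_subset)
  hence "finite (?D `` {u})" "finite (?D\<inverse> `` {u})" using union by (metis finite_Un)+
  thus ?thesis using card_Un_disjoint disjoint union card_link_adj_Image[OF u] by metis
qed

lemma typeII_dir_iff_card_turns_at:
  assumes T: "z_orientation F T"
  shows "typeII_dir F T u v \<longleftrightarrow> u \<in> link_verts F v \<and> card (turns_at T v `` {u}) = 2"
    and "typeII_dir F T v u \<longleftrightarrow> u \<in> link_verts F v \<and> card ((turns_at T v)\<inverse> `` {u}) = 2"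
proof -
  let ?A = "turns_at T v `` {u}" and ?B = "(turns_at T v)\<inverse> `` {u}"
  have "passes T u v \<longleftrightarrow> ?A \<noteq> {}" "passes T v u \<longleftrightarrow> ?B \<noteq> {}"
    using passes_iff_turns_at[OF T, of u v] passes_from_iff_turns_at[OF T, of v u] by auto
  moreover have "(?A \<noteq> {} \<and> ?B = {} \<longleftrightarrow> card ?A = 2) \<and> (?B \<noteq> {} \<and> ?A = {} \<longleftrightarrow> card ?B = 2)"
    if "u \<in> link_verts F v"
  proof -
    have "?A \<subseteq> link_verts F v" "?B \<subseteq> link_verts F v"
      using turns_at_subset_link_adj[OF T] link_adj_subset[of F v] by blast+
    hence "finite ?A" "finite ?B" using finite_link_verts finite_subset by blast+
    thus ?thesis using card_turns_at_Image[OF T that] by auto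
  qed
  ultimately show "typeII_dir F T u v \<longleftrightarrow> u \<in> link_verts F v \<and> card ?A = 2"
    and "typeII_dir F T v u \<longleftrightarrow> u \<in> link_verts F v \<and> card ?B = 2"
    by (auto simp: typeII_dir_def link_verts_def insert_commute)
qed

theorem card_typeII_dir_to_eq_from:
  assumes T: "z_orientation F T"
  shows "card {u. typeII_dir F T u v} = card {w. typeII_dir F T v w}"
proof -
  have "turns_at T v \<subseteq> link_verts F v \<times> link_verts F v"
    using turns_at_subset_link_adj[OF T] link_adj_subset[of F v] by blast
  from card_outdeg2_eq_card_indeg2[OF finite_link_verts this card_turns_at_Image[OF T]]
  show ?thesis
    unfolding typeII_dir_iff_card_turns_at(1)[OF T, of _ v] typeII_dir_iff_card_turns_at(2)[OF T, of v]
    by simp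
qed

end

lemma triangulation_closed_pseudosurface: "triangulation F \<Longrightarrow> closed_pseudosurface F"
  by unfold_locales (auto simp: triangulation_def)

theorem lemma1:
  fixes F :: "'a set set" and T :: "(int \<Rightarrow> 'a set) set" and v :: 'a
  assumes "triangulation F"
    and "z_orientation F T"
    and "typeII_vertex F T v"
  shows "card {u. typeII_dir F T u v} = card {w. typeII_dir F T v w}"
  using closed_pseudosurface.card_typeII_dir_to_eq_from[OF triangulation_closed_pseudosurface] assms(1,2) .

end
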